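(* For every $\beta\in(0,1]$, every integer $n>2$ and every integer $K$ with $1\le K\le\min\{n-1,e^{1/(5\beta)}\}$, there exists a competing content creation game $\mathcal G=(\{\mathcal S_i\}_{i=1}^n,\mathcal X,\sigma,\beta,K)$ with $n$ players such that $$PoA(\mathcal G)>\frac{n-1}{n}+\frac{1}{1+5\beta\log K}.$$
   Context: A competing content creation game $\mathcal G=(\{\mathcal S_i\}_{i=1}^n,\mathcal X,\sigma,\beta,K)$ consists of: a finite set of users $\mathcal X=\{x_1,\dots,x_m\}\subset\mathbb R^d$; players $i\in[n]$, player $i$ having an action set $\mathcal S_i\subset\mathbb R^d$; a relevance function $\sigma:\mathbb R^d\times\mathbb R^d\to[0,1]$; a noise parameter $\beta>0$; and an integer $1\le K\le n$. Let $\mathcal S=\prod_i\mathcal S_i$. For $s=(s_1,\dots,s_n)\in\mathcal S$ and user $x_j$, $\mathcal T_j(s;K)$ is the set of the first $K$ players of an ordering of $[n]$ by non-increasing $\sigma(s_i,x_j)$ (ties broken uniformly at random). Let $\varepsilon_1,\dots,\varepsilon_n$ be i.i.d. Gumbel with location $-\beta\gamma$ and scale $\beta$ (CDF $t\mapsto\exp(-e^{-(t+\beta\gamma)/\beta})$, $\gamma$ the Euler–Mascheroni constant). User $j$ chooses $i_j^*=\arg\max_{i\in\mathcal T_j(s;K)}\{\sigma(s_i,x_j)+\varepsilon_i\}$; $x_j\to s_i$ denotes the event $i_j^*=i$. User utility $\pi_j(s)=\mathbb E[\max_{i\in\mathcal T_j(s;K)}\{\sigma(s_i,x_j)+\varepsilon_i\}]$;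 player utility $u_i(s)=\sum_j\mathbb E[\sigma(s_i,x_j)+\varepsilon_i\mid x_j\to s_i]\Pr[x_j\to s_i]$; welfare $W(s)=\sum_j\pi_j(s)$. A CCE is a distribution $\alpha$ on $\mathcal S$ with $\mathbb E_{s\sim\alpha}[u_i(s)]\ge\mathbb E_{s\sim\alpha}[u_i(s_i',s_{-i})]$ for all $i$ and $s_i'\in\mathcal S_i$. $PoA(\mathcal G)=\max_{s\in\mathcal S}W(s)\big/\min_{\alpha\in CCE(\mathcal G)}\mathbb E_{s\sim\alpha}[W(s)]$. *)

theory Defs
  imports "HOL-Probability.Probability" "HOL-Combinatorics.Multiset_Permutations"
begin

(* Players are 0,...,n-1.  Points of R^d are real lists of length d.
   A strategy profile is an element of PiE {..<n} S. *)

(* Gumbel distribution with location -beta*gamma and scale beta, given by its density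
   (derivative of the CDF  t |-> exp(-exp(-(t + beta*gamma)/beta)) ). *)
definition gumbel_cdf :: "real \<Rightarrow> real \<Rightarrow> real" where
  "gumbel_cdf \<beta> t = exp (- exp (- (t + \<beta> * euler_mascheroni) / \<beta>))"

definition gumbel :: "real \<Rightarrow> real measure" where
  "gumbel \<beta> = density lborel
     (\<lambda>t. ennreal ((1 / \<beta>) * exp (- (t + \<beta> * euler_mascheroni) / \<beta>)
                    * exp (- exp (- (t + \<beta> * euler_mascheroni) / \<beta>))))"

definition noise :: "nat \<Rightarrow> real \<Rightarrow> (nat \<Rightarrow> real) measure" where
  "noise n \<beta> = PiM {..<n} (\<lambda>_. gumbel \<beta>)"

definition orderings :: "nat \<Rightarrow> (nat \<Rightarrow> real) \<Rightarrow> nat list set" where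
  "orderings n v = {l \<in> permutations_of_set {..<n}. sorted_wrt (\<lambda>a b. v a \<ge> v b) l}"

definition topK :: "nat \<Rightarrow> nat \<Rightarrow> (nat \<Rightarrow> real) \<Rightarrow> nat set pmf" where
  "topK n K v = map_pmf (\<lambda>l. set (take K l)) (pmf_of_set (orderings n v))"

(* event x_j -> s_i : i is the (a.s. unique) argmax over T *)
definition chosen :: "nat set \<Rightarrow> (nat \<Rightarrow> real) \<Rightarrow> (nat \<Rightarrow> real) \<Rightarrow> nat \<Rightarrow> bool" where
  "chosen T v \<epsilon> i \<longleftrightarrow> i \<in> T \<and> (\<forall>k\<in>T. k \<noteq> i \<longrightarrow> v k + \<epsilon> k < v i + \<epsilon> i)"

definition user_util ::
  "nat \<Rightarrow> ('p \<Rightarrow> 'p \<Rightarrow> real) \<Rightarrow> real \<Rightarrow> nat \<Rightarrow> (nat \<Rightarrow> 'p) \<Rightarrow> 'p \<Rightarrow> real" where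
  "user_util n \<sigma> \<beta> K s x =
     measure_pmf.expectation (topK n K (\<lambda>i. \<sigma> (s i) x))
       (\<lambda>T. \<integral>\<epsilon>. Max ((\<lambda>i. \<sigma> (s i) x + \<epsilon> i) ` T) \<partial>noise n \<beta>)"

(* player utility u_i(s) = sum_j E[sigma + eps_i | x_j -> s_i] Pr[x_j -> s_i]
                        = sum_j E[(sigma + eps_i) * 1{x_j -> s_i}] *)
definition player_util ::
  "nat \<Rightarrow> 'p set \<Rightarrow> ('p \<Rightarrow> 'p \<Rightarrow> real) \<Rightarrow> real \<Rightarrow> nat \<Rightarrow> nat \<Rightarrow> (nat \<Rightarrow> 'p) \<Rightarrow> real" where
  "player_util n X \<sigma> \<beta> K i s =
     (\<Sum>x\<in>X. measure_pmf.expectation (topK n K (\<lambda>k. \<sigma> (s k) x))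
       (\<lambda>T. \<integral>\<epsilon>. (if chosen T (\<lambda>k. \<sigma> (s k) x) \<epsilon> i then \<sigma> (s i) x + \<epsilon> i else 0)
              \<partial>noise n \<beta>))"

definition welfare ::
  "nat \<Rightarrow> 'p set \<Rightarrow> ('p \<Rightarrow> 'p \<Rightarrow> real) \<Rightarrow> real \<Rightarrow> nat \<Rightarrow> (nat \<Rightarrow> 'p) \<Rightarrow> real" where
  "welfare n X \<sigma> \<beta> K s = (\<Sum>x\<in>X. user_util n \<sigma> \<beta> K s x)"

definition profiles :: "nat \<Rightarrow> (nat \<Rightarrow> 'p set) \<Rightarrow> (nat \<Rightarrow> 'p) set" where
  "profiles n S = PiE {..<n} S"

definition is_CCE ::
  "nat \<Rightarrow> (nat \<Rightarrow> 'p set) \<Rightarrow> 'p set \<Rightarrow> ('p \<Rightarrow> 'p \<Rightarrow> real) \<Rightarrow> real \<Rightarrow> nat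
     \<Rightarrow> (nat \<Rightarrow> 'p) pmf \<Rightarrow> bool" where
  "is_CCE n S X \<sigma> \<beta> K \<alpha> \<longleftrightarrow>
     set_pmf \<alpha> \<subseteq> profiles n S \<and>
     (\<forall>i<n. \<forall>s'\<in>S i.
        measure_pmf.expectation \<alpha> (\<lambda>s. player_util n X \<sigma> \<beta> K i s)
        \<ge> measure_pmf.expectation \<alpha> (\<lambda>s. player_util n X \<sigma> \<beta> K i (s(i := s'))))"

definition PoA ::
  "nat \<Rightarrow> (nat \<Rightarrow> 'p set) \<Rightarrow> 'p set \<Rightarrow> ('p \<Rightarrow> 'p \<Rightarrow> real) \<Rightarrow> real \<Rightarrow> nat \<Rightarrow> real" where
  "PoA n S X \<sigma> \<beta> K =
     Max (welfare n X \<sigma> \<beta> K ` profiles n S) /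
     Inf ((\<lambda>\<alpha>. measure_pmf.expectation \<alpha> (welfare n X \<sigma> \<beta> K)) ` {\<alpha>. is_CCE n S X \<sigma> \<beta> K \<alpha>})"

definition cc_game ::
  "nat \<Rightarrow> nat \<Rightarrow> (nat \<Rightarrow> real list set) \<Rightarrow> real list set \<Rightarrow> (real list \<Rightarrow> real list \<Rightarrow> real)
     \<Rightarrow> real \<Rightarrow> nat \<Rightarrow> bool" where
  "cc_game n d S X \<sigma> \<beta> K \<longleftrightarrow>
     finite X \<and> (\<forall>x\<in>X. length x = d) \<and>
     (\<forall>i<n. finite (S i) \<and> S i \<noteq> {} \<and> (\<forall>a\<in>S i. length a = d)) \<and>
     (\<forall>a b. length a = d \<longrightarrow> length b = d \<longrightarrow> 0 \<le> \<sigma> a b \<and> \<sigma> a b \<le> 1) \<and>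
     0 < \<beta> \<and> 1 \<le> K \<and> K \<le> n"

end

(*
  Gumbel noise turns the users' choices into a logit model. A user shown the set T of items with
  relevances v receives expected utility beta * ln (sum_{k in T} exp (v k / beta)), and creator
  i in T collects the fraction exp (v i / beta) / sum_{k in T} exp (v k / beta) of it. Both
  formulas reduce, by conditioning on the noise of the chosen item, to the one-dimensional
  integral E[(v + t) F(t)^A] = (v + beta * ln (1 + A)) / (1 + A) for the Gumbel CDF F.

  The instance has n mainstream users, who value a generic item at 1 and every niche item at
  1 - 1/(2n), and n niche users, the j-th of whom only values the niche item of creator j.
  If every creator offers the generic item, the welfare is n (1 + 2 beta ln K), and this profile
  is a pure Nash equilibrium, hence a coarse correlated equilibrium: a creator switching to its
  niche item becomes the least relevant item of every mainstream user and, as K < n, leaves all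
  their top-K sets, so it can gain at most its niche user. If every creator offers its
  niche item, the welfare is at least n (2 + beta ln K) - 1/2. Every profile has welfare at least
  n - 1/2 > 0, so the price of anarchy is at least the ratio of the two welfares, which exceeds
  (n - 1)/n + 1/(1 + 5 beta ln K) as long as beta ln K <= 2/5.
*)

theory Submission
  imports Defs
begin

section \<open>The Gumbel distribution\<close>

lemma nn_integral_exp_substitution:
  fixes f :: "real \<Rightarrow> real"
  assumes [measurable]: "f \<in> borel_measurable borel"
  shows "(\<integral>\<^sup>+y. f (exp y) * exp y \<partial>lborel) = (\<integral>\<^sup>+t. f t * indicator {0<..} t \<partial>lborel)"
proof -
  let ?F = "density lborel (\<lambda>t. ennreal (f t))"
  let ?G = "density lborel (\<lambda>y. ennreal (f (exp y) * exp y))"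
  have emeasure_density_eq: "emeasure (density lborel (\<lambda>x. ennreal (g x))) A = (\<integral>\<^sup>+x. g x * indicator A x \<partial>lborel)"
    if [measurable]: "g \<in> borel_measurable borel" "A \<in> sets borel" for g :: "real \<Rightarrow> real" and A
    by (subst emeasure_density) (auto intro!: nn_integral_cong split: split_indicator)
  have G_lim: "(\<lambda>N. emeasure ?G {- real N..real N}) \<longlonglongrightarrow> emeasure ?G (\<Union>N. {- real N..real N})"
    by (intro Lim_emeasure_incseq) (auto simp: incseq_def)
  have F_lim: "(\<lambda>N. emeasure ?F {exp (- real N)..exp (real N)})
      \<longlonglongrightarrow> emeasure ?F (\<Union>N. {exp (- real N)..exp (real N)})"
    by (intro Lim_emeasure_incseq) (auto simp: incseq_def)
  have "emeasure ?F {exp (- real N)..exp (real N)} = emeasure ?G {- real N..real N}" for N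
    by (simp add: emeasure_density_eq nn_integral_substitution[where g = exp and g' = exp]
        set_borel_measurable_def continuous_on_exp[OF continuous_on_id])
  moreover have "(\<Union>N. {- real N..real N}) = UNIV"
  proof (intro equalityI subsetI)
    fix y :: real
    obtain N :: nat where "\<bar>y\<bar> \<le> real N" using real_arch_simple by blast
    then show "y \<in> (\<Union>N. {- real N..real N})" by (auto simp: abs_le_iff intro!: exI[of _ N])
  qed simp
  moreover have "(\<Union>N. {exp (- real N)..exp (real N)}) = {0<..}"
  proof (intro equalityI subsetI)
    fix t :: real assume "t \<in> {0<..}"
    then have t: "t > 0" by simp
    obtain N :: nat where "\<bar>ln t\<bar> \<le> real N" using real_arch_simple by blast
    then have "exp (- real N) \<le> t \<and> t \<le> exp (real N)"
      using t by (metis abs_le_iff exp_le_cancel_iff exp_ln minus_le_iff)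
    then show "t \<in> (\<Union>N. {exp (- real N)..exp (real N)})" by auto
  qed (auto intro: less_le_trans[OF exp_gt_zero])
  ultimately show ?thesis
    using LIMSEQ_unique[OF G_lim] F_lim by (simp add: emeasure_density_eq)
qed

definition gumbel_min_density :: "real \<Rightarrow> real" where
  "gumbel_min_density y = exp y * exp (- exp y)"

lemma gumbel_min_density_nonneg: "0 \<le> gumbel_min_density y"
  by (simp add: gumbel_min_density_def)

lemma gumbel_min_density_measurable [measurable]: "gumbel_min_density \<in> borel_measurable borel"
  unfolding gumbel_min_density_def by measurable

lemma nn_integral_exp_mult_gumbel_min_density:
  assumes "h > -1"
  shows "(\<integral>\<^sup>+y. exp (h * y) * gumbel_min_density y \<partial>lborel) = Gamma (1 + h)"
proof -
  have "(\<integral>\<^sup>+y. exp (h * y) * gumbel_min_density y \<partial>lborel)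
      = (\<integral>\<^sup>+y. exp y powr h / exp (exp y) * exp y \<partial>lborel)"
    by (intro nn_integral_cong) (simp add: gumbel_min_density_def powr_def exp_minus field_simps)
  also have "\<dots> = (\<integral>\<^sup>+t. t powr h / exp t * indicator {0<..} t \<partial>lborel)"
    by (rule nn_integral_exp_substitution) measurable
  also have "\<dots> = (\<integral>\<^sup>+t. indicator {0..} t * t powr (1 + h - 1) / exp t \<partial>lborel)"
    by (intro nn_integral_cong) (auto split: split_indicator)
  also have "\<dots> = Gamma (1 + h)"
    using Gamma_conv_nn_integral_real[of "1 + h"] assms by simp
  finally show ?thesis .
qed

lemma gumbel_min_density_exp_moment:
  assumes "h > -1"
  shows "integrable lborel (\<lambda>y. exp (h * y) * gumbel_min_density y)"
    and "(\<integral>y. exp (h * y) * gumbel_min_density y \<partial>lborel) = Gamma (1 + h)"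
proof -
  have "has_bochner_integral lborel (\<lambda>y. exp (h * y) * gumbel_min_density y) (Gamma (1 + h))"
    using assms Gamma_real_pos[of "1 + h"]
    by (intro has_bochner_integral_nn_integral)
       (auto simp: gumbel_min_density_nonneg nn_integral_exp_mult_gumbel_min_density)
  then show "integrable lborel (\<lambda>y. exp (h * y) * gumbel_min_density y)"
    and "(\<integral>y. exp (h * y) * gumbel_min_density y \<partial>lborel) = Gamma (1 + h)"
    by (auto simp: has_bochner_integral_iff)
qed

lemma gumbel_min_density_integral:
  "integrable lborel gumbel_min_density" "(\<integral>y. gumbel_min_density y \<partial>lborel) = 1"
  using gumbel_min_density_exp_moment[of 0] by simp_all

lemma integrable_gumbel_min_density_mean: "integrable lborel (\<lambda>y. y * gumbel_min_density y)"
proof (rule Bochner_Integration.integrable_bound)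
  let ?\<psi> = gumbel_min_density
  show "integrable lborel (\<lambda>y. 2 * (exp ((1/2) * y) * ?\<psi> y + exp ((-1/2) * y) * ?\<psi> y))"
    using gumbel_min_density_exp_moment(1)[of "1/2"] gumbel_min_density_exp_moment(1)[of "-1/2"]
    by auto
  show "AE y in lborel. norm (y * ?\<psi> y)
      \<le> norm (2 * (exp ((1/2) * y) * ?\<psi> y + exp ((-1/2) * y) * ?\<psi> y))"
  proof (intro AE_I2)
    fix y :: real
    have "\<bar>y\<bar> / 2 \<le> exp (\<bar>y\<bar> / 2)"
      using exp_ge_add_one_self[of "\<bar>y\<bar> / 2"] by linarith
    also have "\<dots> \<le> exp (y/2) + exp (-y/2)"
      by (cases "y \<ge> 0") auto
    finally have "\<bar>y\<bar> * ?\<psi> y \<le> 2 * (exp (y/2) + exp (-y/2)) * ?\<psi> y"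
      by (intro mult_right_mono gumbel_min_density_nonneg) simp
    then show "norm (y * ?\<psi> y) \<le> norm (2 * (exp ((1/2) * y) * ?\<psi> y + exp ((-1/2) * y) * ?\<psi> y))"
      using gumbel_min_density_nonneg[of y] by (simp add: abs_mult algebra_simps)
  qed
qed simp

lemma Gamma_difference_quotient_tendsto:
  "((\<lambda>h. (Gamma (1 + h) - 1) / h) \<longlongrightarrow> - euler_mascheroni) (at (0::real))"
proof -
  have "DERIV Gamma (1::real) :> Gamma 1 * Digamma 1"
    by (rule has_field_derivative_Gamma) (auto simp: nonpos_Ints_def)
  then show ?thesis
    by (simp add: DERIV_def Gamma_1 add.commute)
qed

lemma gumbel_min_density_exp_difference_quotient:
  assumes "h > -1"
  shows "integrable lborel (\<lambda>y. (exp (h * y) * gumbel_min_density y - gumbel_min_density y) / h)"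
    and "(\<integral>y. (exp (h * y) * gumbel_min_density y - gumbel_min_density y) / h \<partial>lborel)
      = (Gamma (1 + h) - 1) / h"
  using gumbel_min_density_exp_moment[OF assms] gumbel_min_density_integral by simp_all

text \<open>Differentiating the moment generating function at \<open>0\<close>: by convexity of \<open>exp\<close>, the
  difference quotients \<open>(e\<^sup>h\<^sup>y - 1) / h\<close> bound \<open>y\<close> from above for \<open>h > 0\<close> and from below for
  \<open>h < 0\<close>.\<close>

lemma gumbel_min_density_mean_le:
  assumes "h > 0"
  shows "(\<integral>y. y * gumbel_min_density y \<partial>lborel) \<le> (Gamma (1 + h) - 1) / h"
proof -
  let ?\<psi> = gumbel_min_density
  have "y * ?\<psi> y \<le> (exp (h * y) * ?\<psi> y - ?\<psi> y) / h" for y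
  proof -
    have "y \<le> (exp (h * y) - 1) / h"
      using exp_ge_add_one_self[of "h * y"] assms by (simp add: field_simps)
    then have "y * ?\<psi> y \<le> (exp (h * y) - 1) / h * ?\<psi> y"
      by (rule mult_right_mono[OF _ gumbel_min_density_nonneg])
    then show ?thesis
      by (simp add: left_diff_distrib)
  qed
  then have "(\<integral>y. y * ?\<psi> y \<partial>lborel) \<le> (\<integral>y. (exp (h * y) * ?\<psi> y - ?\<psi> y) / h \<partial>lborel)"
    using assms
    by (intro integral_mono integrable_gumbel_min_density_mean gumbel_min_density_exp_difference_quotient) auto
  then show ?thesis
    using assms gumbel_min_density_exp_difference_quotient(2)[of h] by simp
qed

lemma gumbel_min_density_mean_ge:
  assumes "h < 0" and "h > -1"
  shows "(Gamma (1 + h) - 1) / h \<le> (\<integral>y. y * gumbel_min_density y \<partial>lborel)"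
proof -
  let ?\<psi> = gumbel_min_density
  have "(exp (h * y) * ?\<psi> y - ?\<psi> y) / h \<le> y * ?\<psi> y" for y
  proof -
    have "h * y \<le> exp (h * y) - 1"
      using exp_ge_add_one_self[of "h * y"] by linarith
    then have "(exp (h * y) - 1) / h \<le> y"
      using assms by (simp add: divide_le_eq mult.commute)
    then have "(exp (h * y) - 1) / h * ?\<psi> y \<le> y * ?\<psi> y"
      by (rule mult_right_mono[OF _ gumbel_min_density_nonneg])
    then show ?thesis
      by (simp add: left_diff_distrib)
  qed
  then have "(\<integral>y. (exp (h * y) * ?\<psi> y - ?\<psi> y) / h \<partial>lborel) \<le> (\<integral>y. y * ?\<psi> y \<partial>lborel)"
    using assms
    by (intro integral_mono integrable_gumbel_min_density_mean gumbel_min_density_exp_difference_quotient) auto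
  then show ?thesis
    using assms gumbel_min_density_exp_difference_quotient(2)[of h] by simp
qed

lemma gumbel_min_density_mean: "(\<integral>y. y * gumbel_min_density y \<partial>lborel) = - euler_mascheroni"
proof -
  let ?I = "\<integral>y. y * gumbel_min_density y \<partial>lborel" and ?q = "\<lambda>h::real. (Gamma (1 + h) - 1) / h"
  have "?I \<le> - euler_mascheroni"
  proof (rule tendsto_lowerbound[of ?q])
    show "(?q \<longlongrightarrow> - euler_mascheroni) (at_right 0)"
      using Gamma_difference_quotient_tendsto by (rule tendsto_within_subset) auto
    show "\<forall>\<^sub>F h in at_right 0. ?I \<le> ?q h"
      using eventually_at_right_less[of 0] by eventually_elim (rule gumbel_min_density_mean_le)
  qed simp
  moreover have "- euler_mascheroni \<le> ?I"
  proof (rule tendsto_upperbound[of ?q])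
    show "(?q \<longlongrightarrow> - euler_mascheroni) (at_left 0)"
      using Gamma_difference_quotient_tendsto by (rule tendsto_within_subset) auto
    have "\<forall>\<^sub>F h in at_left 0. h < 0 \<and> h > (-1::real)"
      unfolding eventually_at_left_field by (intro exI[of _ "-1"]) auto
    then show "\<forall>\<^sub>F h in at_left 0. ?q h \<le> ?I"
      by eventually_elim (auto intro: gumbel_min_density_mean_ge)
  qed simp
  ultimately show ?thesis
    by linarith
qed

lemma gumbel_min_density_tail: "(\<integral>y. indicator {c<..} y * gumbel_min_density y \<partial>lborel) = exp (- exp c)"
proof -
  have "(LBINT y=ereal c..\<infinity>. gumbel_min_density y) = 0 - (- exp (- exp c))"
  proof (rule interval_integral_FTC_nonneg)
    show "DERIV (\<lambda>y. - exp (- exp y)) x :> gumbel_min_density x" for x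
      by (auto intro!: derivative_eq_intros simp: gumbel_min_density_def)
    show "(((\<lambda>y. - exp (- exp y)) \<circ> real_of_ereal) \<longlongrightarrow> - exp (- exp c)) (at_right (ereal c))"
      by (auto simp: ereal_tendsto_simps intro!: tendsto_eq_intros)
    have "((\<lambda>y::real. - exp (- exp y)) \<longlongrightarrow> 0) at_top"
      by (rule tendsto_eq_intros exp_at_bot[THEN filterlim_compose]
          | simp add: filterlim_uminus_at_bot exp_at_top)+
    then show "(((\<lambda>y. - exp (- exp y)) \<circ> real_of_ereal) \<longlongrightarrow> 0) (at_left \<infinity>)"
      unfolding ereal_tendsto_simps .
  qed (auto simp: gumbel_min_density_def intro!: continuous_intros)
  then show ?thesis
    by (simp add: interval_integral_Ioi set_lebesgue_integral_def)
qed

definition gumbel_density :: "real \<Rightarrow> real \<Rightarrow> real" where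
  "gumbel_density \<beta> t = gumbel_min_density (- (t + \<beta> * euler_mascheroni) / \<beta>) / \<beta>"

lemma gumbel_eq_density: "gumbel \<beta> = density lborel (\<lambda>t. ennreal (gumbel_density \<beta> t))"
  unfolding gumbel_def gumbel_density_def gumbel_min_density_def
  by (intro arg_cong[where f = "density lborel"] ext) (simp add: divide_inverse ac_simps)

lemma gumbel_density_nonneg: "\<beta> > 0 \<Longrightarrow> 0 \<le> gumbel_density \<beta> t"
  by (simp add: gumbel_density_def gumbel_min_density_nonneg)

lemma gumbel_density_measurable [measurable]: "gumbel_density \<beta> \<in> borel_measurable borel"
  unfolding gumbel_density_def by measurable

lemma gumbel_density_affine:
  assumes "\<beta> > 0"
  shows "gumbel_density \<beta> (- \<beta> * euler_mascheroni + (- \<beta>) * y) * g (- \<beta> * euler_mascheroni + (- \<beta>) * y)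
    = (1 / \<beta>) * (gumbel_min_density y * g (- \<beta> * euler_mascheroni - \<beta> * y))"
  using assms by (simp add: gumbel_density_def)

lemma sets_gumbel [measurable_cong]: "sets (gumbel \<beta>) = sets borel"
  by (simp add: gumbel_def)

lemma integral_gumbel:
  fixes g :: "real \<Rightarrow> real"
  assumes "\<beta> > 0" and [measurable]: "g \<in> borel_measurable borel"
  shows "(\<integral>t. g t \<partial>gumbel \<beta>)
    = (\<integral>y. gumbel_min_density y * g (- \<beta> * euler_mascheroni - \<beta> * y) \<partial>lborel)"
proof -
  let ?a = "\<lambda>y. - \<beta> * euler_mascheroni + (- \<beta>) * y"
  have "(\<integral>t. g t \<partial>gumbel \<beta>) = (\<integral>t. gumbel_density \<beta> t * g t \<partial>lborel)"
    unfolding gumbel_eq_density using assms by (subst integral_density) (auto simp: gumbel_density_nonneg)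
  also have "\<dots> = \<bar>- \<beta>\<bar> *\<^sub>R (\<integral>y. gumbel_density \<beta> (?a y) * g (?a y) \<partial>lborel)"
    using assms by (intro lborel_integral_real_affine) simp
  also have "\<dots> = (\<integral>y. gumbel_min_density y * g (- \<beta> * euler_mascheroni - \<beta> * y) \<partial>lborel)"
    using assms by (simp only: gumbel_density_affine) simp
  finally show ?thesis .
qed

lemma integrable_gumbel_iff:
  fixes g :: "real \<Rightarrow> real"
  assumes "\<beta> > 0" and [measurable]: "g \<in> borel_measurable borel"
  shows "integrable (gumbel \<beta>) g
    \<longleftrightarrow> integrable lborel (\<lambda>y. gumbel_min_density y * g (- \<beta> * euler_mascheroni - \<beta> * y))"
proof -
  let ?a = "\<lambda>y. - \<beta> * euler_mascheroni + (- \<beta>) * y"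
  have "integrable (gumbel \<beta>) g \<longleftrightarrow> integrable lborel (\<lambda>t. gumbel_density \<beta> t * g t)"
    unfolding gumbel_eq_density using assms
    by (subst integrable_density) (auto simp: gumbel_density_nonneg)
  also have "\<dots> \<longleftrightarrow> integrable lborel (\<lambda>y. gumbel_density \<beta> (?a y) * g (?a y))"
    using assms by (intro lborel_integrable_real_affine_iff[symmetric]) simp
  also have "\<dots> \<longleftrightarrow> integrable lborel
      (\<lambda>y. (1 / \<beta>) * (gumbel_min_density y * g (- \<beta> * euler_mascheroni - \<beta> * y)))"
    using assms by (simp only: gumbel_density_affine)
  also have "\<dots> \<longleftrightarrow> integrable lborel (\<lambda>y. gumbel_min_density y * g (- \<beta> * euler_mascheroni - \<beta> * y))"
    using assms by (subst integrable_mult_left_iff) simp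
  finally show ?thesis .
qed

lemma prob_space_gumbel:
  assumes "\<beta> > 0"
  shows "prob_space (gumbel \<beta>)"
proof (rule prob_spaceI)
  have "integrable (gumbel \<beta>) (indicator UNIV :: real \<Rightarrow> real)"
    using assms gumbel_min_density_integral by (subst integrable_gumbel_iff) auto
  then have "emeasure (gumbel \<beta>) (space (gumbel \<beta>)) \<noteq> \<infinity>"
    by (subst (asm) integrable_indicator_iff) (simp add: less_top)
  moreover have "measure (gumbel \<beta>) (space (gumbel \<beta>)) = 1"
    using integral_gumbel[OF assms, of "indicator UNIV"] gumbel_min_density_integral by simp
  ultimately show "emeasure (gumbel \<beta>) (space (gumbel \<beta>)) = 1"
    by (simp add: emeasure_eq_ennreal_measure)
qed

lemma gumbel_mean:
  assumes "\<beta> > 0"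
  shows "integrable (gumbel \<beta>) (\<lambda>t. t)" and "(\<integral>t. t \<partial>gumbel \<beta>) = 0"
proof -
  let ?\<psi> = gumbel_min_density
  have eq: "?\<psi> y * (- \<beta> * euler_mascheroni - \<beta> * y)
      = (- \<beta> * euler_mascheroni) * ?\<psi> y + (- \<beta>) * (y * ?\<psi> y)" for y
    by (simp add: algebra_simps)
  have "integrable lborel (\<lambda>y. ?\<psi> y * (- \<beta> * euler_mascheroni - \<beta> * y))"
    unfolding eq using gumbel_min_density_integral integrable_gumbel_min_density_mean by simp
  then show "integrable (gumbel \<beta>) (\<lambda>t. t)"
    using assms by (subst integrable_gumbel_iff) (simp_all add: measurable_ident_sets)
  have "(\<integral>t. t \<partial>gumbel \<beta>) = (\<integral>y. ?\<psi> y * (- \<beta> * euler_mascheroni - \<beta> * y) \<partial>lborel)"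
    using assms by (intro integral_gumbel) (simp_all add: measurable_ident_sets)
  also have "\<dots> = 0"
    unfolding eq using gumbel_min_density_integral integrable_gumbel_min_density_mean
    by (simp add: gumbel_min_density_mean)
  finally show "(\<integral>t. t \<partial>gumbel \<beta>) = 0" .
qed

text \<open>The flag chooses between \<open><\<close> and \<open>\<le>\<close>. Under the atomless Gumbel law both give the
  CDF, which allows ties to be broken by index.\<close>

definition below_indicator :: "bool \<Rightarrow> real \<Rightarrow> real \<Rightarrow> real" where
  "below_indicator strict x c = of_bool (if strict then x < c else x \<le> c)"

lemma below_indicator_measurable [measurable]:
  assumes [measurable]: "f \<in> borel_measurable M" "g \<in> borel_measurable M"
  shows "(\<lambda>w. below_indicator strict (f w) (g w)) \<in> borel_measurable M"
  unfolding below_indicator_def by (cases strict) simp_all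

lemma integral_below_indicator_gumbel:
  assumes "\<beta> > 0"
  shows "(\<integral>x. below_indicator strict x c \<partial>gumbel \<beta>) = gumbel_cdf \<beta> c"
proof -
  let ?p = "- (c + \<beta> * euler_mascheroni) / \<beta>"
  have "(\<integral>x. below_indicator strict x c \<partial>gumbel \<beta>)
      = (\<integral>y. gumbel_min_density y * below_indicator strict (- \<beta> * euler_mascheroni - \<beta> * y) c \<partial>lborel)"
    using assms below_indicator_measurable[of "\<lambda>t. t" borel "\<lambda>_. c"] by (intro integral_gumbel) simp_all
  also have "\<dots> = (\<integral>y. indicator {?p<..} y * gumbel_min_density y \<partial>lborel)"
  proof (rule integral_cong_AE)
    show "AE y in lborel. gumbel_min_density y * below_indicator strict (- \<beta> * euler_mascheroni - \<beta> * y) c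
        = indicator {?p<..} y * gumbel_min_density y"
      using AE_lborel_singleton[of ?p]
    proof eventually_elim
      case (elim y)
      then show ?case
        using assms by (auto simp: below_indicator_def indicator_def field_simps)
    qed
  qed simp_all
  also have "\<dots> = gumbel_cdf \<beta> c"
    by (simp add: gumbel_min_density_tail gumbel_cdf_def)
  finally show ?thesis .
qed

lemma gumbel_cdf_powr:
  "gumbel_cdf \<beta> t powr A = exp (- A * exp (- (t + \<beta> * euler_mascheroni) / \<beta>))"
  by (simp add: gumbel_cdf_def powr_def)

lemma prod_gumbel_cdf_shift:
  assumes "\<beta> > 0" and "finite S"
  shows "(\<Prod>k\<in>S. gumbel_cdf \<beta> (t + a k)) = gumbel_cdf \<beta> t powr (\<Sum>k\<in>S. exp (- a k / \<beta>))"
proof -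
  let ?e = "exp (- (t + \<beta> * euler_mascheroni) / \<beta>)"
  have "gumbel_cdf \<beta> (t + a k) = exp (- (exp (- a k / \<beta>) * ?e))" for k
  proof -
    have "- (t + a k + \<beta> * euler_mascheroni) / \<beta> = - a k / \<beta> + - (t + \<beta> * euler_mascheroni) / \<beta>"
      using assms by (simp add: field_simps)
    then show ?thesis
      unfolding gumbel_cdf_def by (simp only: exp_add)
  qed
  then have "(\<Prod>k\<in>S. gumbel_cdf \<beta> (t + a k)) = exp (\<Sum>k\<in>S. - (exp (- a k / \<beta>) * ?e))"
    using assms by (simp add: exp_sum)
  also have "\<dots> = gumbel_cdf \<beta> t powr (\<Sum>k\<in>S. exp (- a k / \<beta>))"
    by (simp add: gumbel_cdf_powr sum_negf sum_distrib_right)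
  finally show ?thesis .
qed

text \<open>In the coordinates of \<open>gumbel_min_density\<close>, the weight \<open>F(t)\<^sup>A\<close> becomes
  \<open>exp (- A e\<^sup>y)\<close>, and the shift \<open>y \<mapsto> y - ln (1 + A)\<close> turns \<open>e\<^sup>y exp (- (1 + A) e\<^sup>y)\<close> back into
  the density divided by \<open>1 + A\<close>.\<close>

lemma integral_gumbel_affine_times_cdf_powr:
  assumes "\<beta> > 0" and "A \<ge> 0"
  shows "integrable (gumbel \<beta>) (\<lambda>t. (v + t) * gumbel_cdf \<beta> t powr A)"
    and "(\<integral>t. (v + t) * gumbel_cdf \<beta> t powr A \<partial>gumbel \<beta>) = (v + \<beta> * ln (1 + A)) / (1 + A)"
proof -
  let ?\<psi> = gumbel_min_density
  define B where "B = 1 + A"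
  define c where "c = v - \<beta> * euler_mascheroni + \<beta> * ln B"
  define H where "H = (\<lambda>y. ?\<psi> y * ((v + (- \<beta> * euler_mascheroni - \<beta> * y))
    * gumbel_cdf \<beta> (- \<beta> * euler_mascheroni - \<beta> * y) powr A))"
  have B: "B > 0"
    using assms by (simp add: B_def)
  have H_eq: "H y = exp y * exp (- B * exp y) * (v - \<beta> * euler_mascheroni - \<beta> * y)" for y
    using assms by (simp add: H_def gumbel_cdf_powr gumbel_min_density_def B_def field_simps mult_exp_exp)
  have H_shift: "H (- ln B + 1 * y) = (c / B) * ?\<psi> y + (- \<beta> / B) * (y * ?\<psi> y)" for y
  proof -
    have shift: "exp (y - ln B) = exp y / B"
      using B by (simp add: exp_diff)
    show ?thesis
      unfolding H_eq using B by (simp add: shift gumbel_min_density_def c_def field_simps)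
  qed
  have meas: "(\<lambda>t. (v + t) * gumbel_cdf \<beta> t powr A) \<in> borel_measurable borel"
    unfolding gumbel_cdf_def by measurable
  have "integrable lborel (\<lambda>y. H (- ln B + 1 * y))"
    unfolding H_shift using gumbel_min_density_integral integrable_gumbel_min_density_mean by simp
  then have "integrable lborel H"
    by (subst (asm) lborel_integrable_real_affine_iff) auto
  then show "integrable (gumbel \<beta>) (\<lambda>t. (v + t) * gumbel_cdf \<beta> t powr A)"
    using assms(1) meas by (simp add: integrable_gumbel_iff H_def)
  have "(\<integral>t. (v + t) * gumbel_cdf \<beta> t powr A \<partial>gumbel \<beta>) = (\<integral>y. H y \<partial>lborel)"
    using assms(1) meas by (simp add: integral_gumbel H_def)
  also have "\<dots> = \<bar>1\<bar> *\<^sub>R (\<integral>y. H (- ln B + 1 * y) \<partial>lborel)"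
    by (rule lborel_integral_real_affine) simp
  also have "\<dots> = c / B + (- \<beta> / B) * (- euler_mascheroni)"
    unfolding H_shift using gumbel_min_density_integral integrable_gumbel_min_density_mean
    by (simp add: gumbel_min_density_mean)
  also have "\<dots> = (c + \<beta> * euler_mascheroni) / B"
    using B by (simp add: field_simps)
  also have "\<dots> = (v + \<beta> * ln (1 + A)) / (1 + A)"
    by (simp add: c_def B_def)
  finally show "(\<integral>t. (v + t) * gumbel_cdf \<beta> t powr A \<partial>gumbel \<beta>) = (v + \<beta> * ln (1 + A)) / (1 + A)" .
qed

section \<open>Logit choice under Gumbel noise\<close>

context
  fixes M :: "'a measure" and \<phi> :: "'a \<Rightarrow> real" and g :: "'i \<Rightarrow> 'a \<Rightarrow> 'a \<Rightarrow> real"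
    and I :: "'i set" and i :: 'i
  assumes M: "prob_space M" and I: "finite I" "i \<in> I" and \<phi>: "integrable M \<phi>"
    and g_meas: "\<And>k. (\<lambda>(z, t). g k z t) \<in> borel_measurable (M \<Otimes>\<^sub>M M)"
    and g_bounded: "\<And>k z t. \<bar>g k z t\<bar> \<le> 1"
begin

private lemma component_pair_measurable [measurable]:
  assumes "k \<in> X" and "i \<in> X"
  shows "(\<lambda>\<omega>. g k (\<omega> k) (\<omega> i)) \<in> borel_measurable (Pi\<^sub>M X (\<lambda>_. M))"
  using measurable_compose[OF measurable_Pair[OF measurable_component_singleton[OF assms(1)]
        measurable_component_singleton[OF assms(2)]] g_meas[of k]]
  by simp

lemma integrable_PiM_component_times_prod:
  "integrable (Pi\<^sub>M I (\<lambda>_. M)) (\<lambda>\<omega>. \<phi> (\<omega> i) * (\<Prod>k\<in>I - {i}. g k (\<omega> k) (\<omega> i)))"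
proof (rule Bochner_Integration.integrable_bound)
  show "integrable (Pi\<^sub>M I (\<lambda>_. M)) (\<lambda>\<omega>. \<phi> (\<omega> i))"
    using \<phi> I distr_PiM_component[of I "\<lambda>_. M" i] M
    by (subst integrable_distr_eq[symmetric]) auto
  have [measurable]: "\<phi> \<in> borel_measurable M"
    using \<phi> by auto
  show "(\<lambda>\<omega>. \<phi> (\<omega> i) * (\<Prod>k\<in>I - {i}. g k (\<omega> k) (\<omega> i))) \<in> borel_measurable (Pi\<^sub>M I (\<lambda>_. M))"
    using I by measurable
  show "AE \<omega> in Pi\<^sub>M I (\<lambda>_. M). norm (\<phi> (\<omega> i) * (\<Prod>k\<in>I - {i}. g k (\<omega> k) (\<omega> i))) \<le> norm (\<phi> (\<omega> i))"
    using g_bounded by (intro AE_I2) (simp add: abs_mult abs_prod prod_le_1 mult_left_le)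
qed

text \<open>Fubini over the split \<open>I = {i} \<union> J\<close>: for fixed \<open>\<omega> i\<close> the remaining factors are independent.\<close>

lemma integral_PiM_component_times_prod:
  "(\<integral>\<omega>. \<phi> (\<omega> i) * (\<Prod>k\<in>I - {i}. g k (\<omega> k) (\<omega> i)) \<partial>Pi\<^sub>M I (\<lambda>_. M))
    = (\<integral>t. \<phi> t * (\<Prod>k\<in>I - {i}. \<integral>z. g k z t \<partial>M) \<partial>M)"
proof -
  interpret product_prob_space "\<lambda>_::'i. M"
    using M by (rule product_prob_spaceI)
  define J where "J = I - {i}"
  define f where "f = (\<lambda>\<omega>. \<phi> (\<omega> i) * (\<Prod>k\<in>J. g k (\<omega> k) (\<omega> i)))"
  have I_eq: "I = {i} \<union> J" and disj: "{i} \<inter> J = {}" and J: "finite J"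
    using I by (auto simp: J_def)
  have g_int: "integrable M (\<lambda>z. g k z t)" if "t \<in> space M" for k t
    using g_bounded measurable_Pair1[OF g_meas[of k] that]
    by (intro finite_measure.integrable_const_bound[where B = 1]) (auto simp: M prob_space.finite_measure)
  have inner: "(\<integral>y. f (merge {i} J (x, y)) \<partial>Pi\<^sub>M J (\<lambda>_. M)) = \<phi> (x i) * (\<Prod>k\<in>J. \<integral>z. g k z (x i) \<partial>M)"
    if "x \<in> space (Pi\<^sub>M {i} (\<lambda>_. M))" for x
  proof -
    have "x i \<in> space M"
      using that by (auto simp: space_PiM)
    have "f (merge {i} J (x, y)) = \<phi> (x i) * (\<Prod>k\<in>J. g k (y k) (x i))" for y
      unfolding f_def using disj by (auto simp: merge_def intro!: prod.cong)
    moreover have "(\<integral>y. (\<Prod>k\<in>J. g k (y k) (x i)) \<partial>Pi\<^sub>M J (\<lambda>_. M)) = (\<Prod>k\<in>J. \<integral>z. g k z (x i) \<partial>M)"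
      using J g_int[OF \<open>x i \<in> space M\<close>] by (rule product_integral_prod)
    ultimately show ?thesis
      by simp
  qed
  have [measurable]: "\<phi> \<in> borel_measurable M"
    using \<phi> by auto
  have [measurable]: "(\<lambda>p. g k (snd p) (fst p)) \<in> borel_measurable (M \<Otimes>\<^sub>M M)" for k
    using g_meas[of k] by (subst measurable_pair_swap_iff) (simp add: case_prod_beta')
  have "integrable (Pi\<^sub>M I (\<lambda>_. M)) f"
    unfolding f_def J_def by (rule integrable_PiM_component_times_prod)
  then have "(\<integral>\<omega>. f \<omega> \<partial>Pi\<^sub>M I (\<lambda>_. M))
      = (\<integral>x. (\<integral>y. f (merge {i} J (x, y)) \<partial>Pi\<^sub>M J (\<lambda>_. M)) \<partial>Pi\<^sub>M {i} (\<lambda>_. M))"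
    using disj J unfolding I_eq by (intro product_integral_fold) auto
  also have "\<dots> = (\<integral>x. \<phi> (x i) * (\<Prod>k\<in>J. \<integral>z. g k z (x i) \<partial>M) \<partial>Pi\<^sub>M {i} (\<lambda>_. M))"
    by (rule Bochner_Integration.integral_cong[OF refl inner])
  also have "\<dots> = (\<integral>t. \<phi> t * (\<Prod>k\<in>J. \<integral>z. g k z t \<partial>M) \<partial>M)"
    by (rule product_integral_singleton) measurable
  finally show ?thesis
    by (simp add: f_def J_def)
qed

end

lemma prod_below_indicator:
  "finite S \<Longrightarrow> (\<Prod>k\<in>S. below_indicator (s k) (x k) (c k))
    = of_bool (\<forall>k\<in>S. if s k then x k < c k else x k \<le> c k)"
  by (induction S rule: finite_induct) (auto simp: below_indicator_def)

lemma integral_noise_condition_on: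
  fixes \<phi> :: "real \<Rightarrow> real"
  assumes "\<beta> > 0" and "i \<in> T" and "T \<subseteq> {..<n}" and "integrable (gumbel \<beta>) \<phi>"
  shows "integrable (noise n \<beta>)
      (\<lambda>\<omega>. \<phi> (\<omega> i) * (\<Prod>k\<in>T - {i}. below_indicator (strict k) (\<omega> k) (\<omega> i + a k)))"
    and "(\<integral>\<omega>. \<phi> (\<omega> i) * (\<Prod>k\<in>T - {i}. below_indicator (strict k) (\<omega> k) (\<omega> i + a k)) \<partial>noise n \<beta>)
      = (\<integral>t. \<phi> t * (\<Prod>k\<in>T - {i}. gumbel_cdf \<beta> (t + a k)) \<partial>gumbel \<beta>)"
proof -
  define g where "g k z t = (if k \<in> T then below_indicator (strict k) z (t + a k) else 1)" for k z t
  have restrict: "({..<n} - {i}) \<inter> T = T - {i}"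
    using assms(3) by blast
  have prod_g: "(\<Prod>k\<in>{..<n} - {i}. g k (x k) t) = (\<Prod>k\<in>T - {i}. below_indicator (strict k) (x k) (t + a k))"
    for x t
    unfolding g_def by (simp add: prod.inter_restrict[symmetric] restrict)
  have g_meas: "(\<lambda>(z, t). g k z t) \<in> borel_measurable (gumbel \<beta> \<Otimes>\<^sub>M gumbel \<beta>)" for k
    by (cases "k \<in> T") (simp_all add: g_def case_prod_beta')
  have g_bounded: "\<bar>g k z t\<bar> \<le> 1" for k z t
    by (simp add: g_def below_indicator_def)
  have prod_integral_g: "(\<Prod>k\<in>{..<n} - {i}. \<integral>z. g k z t \<partial>gumbel \<beta>) = (\<Prod>k\<in>T - {i}. gumbel_cdf \<beta> (t + a k))" for t
  proof -
    have "(\<integral>z. g k z t \<partial>gumbel \<beta>) = (if k \<in> T then gumbel_cdf \<beta> (t + a k) else 1)" for k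
      using prob_space.prob_space[OF prob_space_gumbel[OF assms(1)]]
      by (simp add: g_def integral_below_indicator_gumbel[OF assms(1)])
    then show ?thesis
      by (simp add: prod.inter_restrict[symmetric] restrict)
  qed
  have i: "i \<in> {..<n}"
    using assms(2,3) by blast
  note product =
    integrable_PiM_component_times_prod[where g = g, OF prob_space_gumbel[OF assms(1)] finite_lessThan i
      assms(4) g_meas g_bounded]
    integral_PiM_component_times_prod[where g = g, OF prob_space_gumbel[OF assms(1)] finite_lessThan i
      assms(4) g_meas g_bounded]
  show "integrable (noise n \<beta>)
      (\<lambda>\<omega>. \<phi> (\<omega> i) * (\<Prod>k\<in>T - {i}. below_indicator (strict k) (\<omega> k) (\<omega> i + a k)))"
    using product(1) by (simp add: noise_def prod_g)
  show "(\<integral>\<omega>. \<phi> (\<omega> i) * (\<Prod>k\<in>T - {i}. below_indicator (strict k) (\<omega> k) (\<omega> i + a k)) \<partial>noise n \<beta>)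
      = (\<integral>t. \<phi> t * (\<Prod>k\<in>T - {i}. gumbel_cdf \<beta> (t + a k)) \<partial>gumbel \<beta>)"
    using product(2) by (simp add: noise_def prod_g prod_integral_g)
qed

definition logsumexp :: "real \<Rightarrow> (nat \<Rightarrow> real) \<Rightarrow> nat set \<Rightarrow> real" where
  "logsumexp \<beta> v T = \<beta> * ln (\<Sum>k\<in>T. exp (v k / \<beta>))"

definition logit_payoff :: "real \<Rightarrow> (nat \<Rightarrow> real) \<Rightarrow> nat set \<Rightarrow> nat \<Rightarrow> real" where
  "logit_payoff \<beta> v T i =
     (if i \<in> T then exp (v i / \<beta>) / (\<Sum>k\<in>T. exp (v k / \<beta>)) * logsumexp \<beta> v T else 0)"

lemma logit_weight_times_logsumexp:
  fixes v :: "nat \<Rightarrow> real"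
  assumes "\<beta> > 0" and "finite T" and "i \<in> T"
  defines "A \<equiv> \<Sum>k\<in>T - {i}. exp (- (v i - v k) / \<beta>)"
  shows "exp (v i / \<beta>) / (\<Sum>k\<in>T. exp (v k / \<beta>)) * logsumexp \<beta> v T = (v i + \<beta> * ln (1 + A)) / (1 + A)"
proof -
  define Z where "Z = (\<Sum>k\<in>T. exp (v k / \<beta>))"
  have Z: "Z > 0"
    unfolding Z_def using assms(2,3) by (intro sum_pos) auto
  have "Z * exp (- v i / \<beta>) = (\<Sum>k\<in>T. exp ((v k - v i) / \<beta>))"
    unfolding Z_def sum_distrib_right
    by (intro sum.cong refl) (simp add: mult_exp_exp diff_divide_distrib)
  also have "\<dots> = 1 + A"
    unfolding A_def using assms(2,3) by (simp add: sum.remove)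
  finally have A: "1 + A = Z * exp (- v i / \<beta>)" ..
  have "v i + \<beta> * ln (1 + A) = \<beta> * ln Z"
    unfolding A using assms(1) Z by (simp add: ln_mult field_simps)
  then show ?thesis
    unfolding A using Z by (simp add: logsumexp_def Z_def[symmetric] exp_minus field_simps)
qed

lemma integral_noise_winner:
  fixes v :: "nat \<Rightarrow> real"
  assumes "\<beta> > 0" and "i \<in> T" and "T \<subseteq> {..<n}"
  shows "integrable (noise n \<beta>)
      (\<lambda>\<omega>. (v i + \<omega> i) * (\<Prod>k\<in>T - {i}. below_indicator (strict k) (v k + \<omega> k) (v i + \<omega> i)))"
    and "(\<integral>\<omega>. (v i + \<omega> i) * (\<Prod>k\<in>T - {i}. below_indicator (strict k) (v k + \<omega> k) (v i + \<omega> i)) \<partial>noise n \<beta>)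
      = exp (v i / \<beta>) / (\<Sum>k\<in>T. exp (v k / \<beta>)) * logsumexp \<beta> v T"
proof -
  have shift: "below_indicator s (v k + x) (v i + y) = below_indicator s x (y + (v i - v k))" for s k x y
    by (auto simp: below_indicator_def)
  interpret gumbel: prob_space "gumbel \<beta>"
    using assms(1) by (rule prob_space_gumbel)
  have "integrable (gumbel \<beta>) (\<lambda>t. v i + t)"
    using gumbel_mean(1)[OF assms(1)] by (intro Bochner_Integration.integrable_add gumbel.integrable_const)
  note conditioned = integral_noise_condition_on[OF assms this, of strict "\<lambda>k. v i - v k"]
  show "integrable (noise n \<beta>)
      (\<lambda>\<omega>. (v i + \<omega> i) * (\<Prod>k\<in>T - {i}. below_indicator (strict k) (v k + \<omega> k) (v i + \<omega> i)))"
    unfolding shift by (fact conditioned(1))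
  define A where "A = (\<Sum>k\<in>T - {i}. exp (- (v i - v k) / \<beta>))"
  have T: "finite T"
    using assms(3) finite_subset by blast
  have "(\<integral>\<omega>. (v i + \<omega> i) * (\<Prod>k\<in>T - {i}. below_indicator (strict k) (v k + \<omega> k) (v i + \<omega> i)) \<partial>noise n \<beta>)
      = (\<integral>t. (v i + t) * (\<Prod>k\<in>T - {i}. gumbel_cdf \<beta> (t + (v i - v k))) \<partial>gumbel \<beta>)"
    unfolding shift by (fact conditioned(2))
  also have "\<dots> = (\<integral>t. (v i + t) * gumbel_cdf \<beta> t powr A \<partial>gumbel \<beta>)"
    using assms(1) T by (simp add: prod_gumbel_cdf_shift A_def)
  also have "\<dots> = (v i + \<beta> * ln (1 + A)) / (1 + A)"
    using assms(1) by (intro integral_gumbel_affine_times_cdf_powr) (auto simp: A_def intro: sum_nonneg)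
  also have "\<dots> = exp (v i / \<beta>) / (\<Sum>k\<in>T. exp (v k / \<beta>)) * logsumexp \<beta> v T"
    unfolding A_def by (rule logit_weight_times_logsumexp[OF assms(1) T assms(2), symmetric])
  finally show "(\<integral>\<omega>. (v i + \<omega> i) * (\<Prod>k\<in>T - {i}. below_indicator (strict k) (v k + \<omega> k) (v i + \<omega> i)) \<partial>noise n \<beta>)
      = exp (v i / \<beta>) / (\<Sum>k\<in>T. exp (v k / \<beta>)) * logsumexp \<beta> v T" .
qed

lemma least_argmax_iff:
  fixes w :: "nat \<Rightarrow> real"
  assumes "finite T" and "i \<in> T"
  shows "(\<forall>k\<in>T - {i}. if k < i then w k < w i else w k \<le> w i) \<longleftrightarrow> i = Min {j \<in> T. w j = Max (w ` T)}"
proof -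
  define M where "M = Max (w ` T)"
  define i\<^sub>0 where "i\<^sub>0 = Min {j \<in> T. w j = M}"
  have M_ge: "w k \<le> M" if "k \<in> T" for k
    unfolding M_def using assms(1) that by simp
  have "M \<in> w ` T"
    unfolding M_def using assms by (intro Max_in) auto
  then have "{j \<in> T. w j = M} \<noteq> {}"
    by auto
  then have i\<^sub>0: "i\<^sub>0 \<in> T" "w i\<^sub>0 = M" and least: "\<And>j. j \<in> T \<Longrightarrow> w j = M \<Longrightarrow> i\<^sub>0 \<le> j"
    unfolding i\<^sub>0_def using assms(1) Min_in[of "{j \<in> T. w j = M}"] by auto
  have "(\<forall>k\<in>T - {i}. if k < i then w k < w i else w k \<le> w i) \<longleftrightarrow> i = i\<^sub>0"
  proof
    assume wins: "\<forall>k\<in>T - {i}. if k < i then w k < w i else w k \<le> w i"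
    show "i = i\<^sub>0"
    proof (rule ccontr)
      assume "i \<noteq> i\<^sub>0"
      then have "if i\<^sub>0 < i then w i\<^sub>0 < w i else w i\<^sub>0 \<le> w i"
        using wins i\<^sub>0(1) by auto
      then show False
        using M_ge[OF assms(2)] i\<^sub>0 least[OF assms(2)] \<open>i \<noteq> i\<^sub>0\<close> by (auto split: if_splits)
    qed
  next
    assume "i = i\<^sub>0"
    show "\<forall>k\<in>T - {i}. if k < i then w k < w i else w k \<le> w i"
    proof
      fix k assume k: "k \<in> T - {i}"
      then have "k < i \<Longrightarrow> w k \<noteq> M"
        using least[of k] \<open>i = i\<^sub>0\<close> by force
      then show "if k < i then w k < w i else w k \<le> w i"
        using M_ge[of k] k i\<^sub>0 \<open>i = i\<^sub>0\<close> by auto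
    qed
  qed
  then show ?thesis
    by (simp add: M_def i\<^sub>0_def)
qed

lemma Max_eq_sum_least_argmax:
  fixes w :: "nat \<Rightarrow> real"
  assumes "finite T" and "T \<noteq> {}"
  shows "Max (w ` T) = (\<Sum>i\<in>T. w i * (\<Prod>k\<in>T - {i}. below_indicator (k < i) (w k) (w i)))"
proof -
  define i\<^sub>0 where "i\<^sub>0 = Min {j \<in> T. w j = Max (w ` T)}"
  have "{j \<in> T. w j = Max (w ` T)} \<noteq> {}"
    using assms Max_in[of "w ` T"] by fastforce
  then have i\<^sub>0: "i\<^sub>0 \<in> T" "w i\<^sub>0 = Max (w ` T)"
    unfolding i\<^sub>0_def using assms(1) Min_in[of "{j \<in> T. w j = Max (w ` T)}"] by auto
  have "(\<Sum>i\<in>T. w i * (\<Prod>k\<in>T - {i}. below_indicator (k < i) (w k) (w i)))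
      = (\<Sum>i\<in>T. if i = i\<^sub>0 then w i\<^sub>0 else 0)"
    using assms(1) by (intro sum.cong refl) (simp add: prod_below_indicator least_argmax_iff i\<^sub>0_def)
  also have "\<dots> = Max (w ` T)"
    using assms(1) i\<^sub>0 by simp
  finally show ?thesis ..
qed

lemma integral_noise_chosen:
  fixes v :: "nat \<Rightarrow> real"
  assumes "\<beta> > 0" and "T \<subseteq> {..<n}"
  shows "(\<integral>\<epsilon>. (if chosen T v \<epsilon> i then v i + \<epsilon> i else 0) \<partial>noise n \<beta>) = logit_payoff \<beta> v T i"
proof (cases "i \<in> T")
  case True
  have "finite T"
    using assms(2) finite_subset by blast
  then have "(if chosen T v \<epsilon> i then v i + \<epsilon> i else 0)
      = (v i + \<epsilon> i) * (\<Prod>k\<in>T - {i}. below_indicator True (v k + \<epsilon> k) (v i + \<epsilon> i))" for \<epsilon>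
    using True by (auto simp: prod_below_indicator chosen_def)
  then show ?thesis
    using integral_noise_winner(2)[OF assms(1) True assms(2)] True by (simp add: logit_payoff_def)
qed (simp add: chosen_def logit_payoff_def)

lemma integral_noise_Max:
  fixes v :: "nat \<Rightarrow> real"
  assumes "\<beta> > 0" and "T \<subseteq> {..<n}" and "T \<noteq> {}"
  shows "(\<integral>\<epsilon>. Max ((\<lambda>k. v k + \<epsilon> k) ` T) \<partial>noise n \<beta>) = logsumexp \<beta> v T"
proof -
  define Z where "Z = (\<Sum>k\<in>T. exp (v k / \<beta>))"
  define f where "f i \<epsilon> = (v i + \<epsilon> i) * (\<Prod>k\<in>T - {i}. below_indicator (k < i) (v k + \<epsilon> k) (v i + \<epsilon> i))"
    for i \<epsilon>
  have T: "finite T"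
    using assms(2) finite_subset by blast
  have "(\<integral>\<epsilon>. Max ((\<lambda>k. v k + \<epsilon> k) ` T) \<partial>noise n \<beta>) = (\<integral>\<epsilon>. (\<Sum>i\<in>T. f i \<epsilon>) \<partial>noise n \<beta>)"
    using Max_eq_sum_least_argmax[OF T assms(3)] by (simp add: f_def image_image)
  also have "\<dots> = (\<Sum>i\<in>T. \<integral>\<epsilon>. f i \<epsilon> \<partial>noise n \<beta>)"
    unfolding f_def
    by (intro Bochner_Integration.integral_sum integral_noise_winner(1)[OF assms(1) _ assms(2)])
  also have "\<dots> = (\<Sum>i\<in>T. exp (v i / \<beta>) / Z * logsumexp \<beta> v T)"
    unfolding f_def Z_def
    by (intro sum.cong refl integral_noise_winner(2)[OF assms(1) _ assms(2)])
  also have "\<dots> = logsumexp \<beta> v T"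
  proof -
    have "Z > 0"
      unfolding Z_def using T assms(3) by (intro sum_pos) auto
    then show ?thesis
      by (simp add: Z_def[symmetric] flip: sum_divide_distrib sum_distrib_right)
  qed
  finally show ?thesis .
qed

section \<open>Top-\<open>K\<close> sets\<close>

lemma orderings_subset_permutations: "orderings n v \<subseteq> permutations_of_set {..<n}"
  by (auto simp: orderings_def)

lemma finite_orderings: "finite (orderings n v)"
  using finite_permutations_of_set orderings_subset_permutations by (rule finite_subset[rotated])

lemma orderings_nonempty: "orderings n v \<noteq> {}"
proof -
  have "sort_key (\<lambda>k. - v k) [0..<n] \<in> orderings n v"
    using sorted_sort_key[of "\<lambda>k. - v k" "[0..<n]"]
    by (auto simp: orderings_def permutations_of_set_def sorted_map atLeast0LessThan)
  then show ?thesis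
    by blast
qed

lemma orderingsD:
  assumes "l \<in> orderings n v"
  shows "set l = {..<n}" and "distinct l" and "length l = n" and "sorted_wrt (\<lambda>a b. v b \<le> v a) l"
  using assms length_finite_permutations_of_set[of l "{..<n}"]
  by (auto simp: orderings_def dest: permutations_of_setD)

lemma orderings_cong:
  assumes "\<And>k. k < n \<Longrightarrow> v k = v' k"
  shows "orderings n v = orderings n v'"
proof -
  have "sorted_wrt (\<lambda>a b. v b \<le> v a) l = sorted_wrt (\<lambda>a b. v' b \<le> v' a) l"
    if "set l = {..<n}" for l
    using that assms by (auto elim!: sorted_wrt_mono_rel[rotated])
  then show ?thesis
    unfolding orderings_def by (auto dest: permutations_of_setD)
qed

lemma orderings_const: "orderings n (\<lambda>_. c) = permutations_of_set {..<n}"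
  by (auto simp: orderings_def)

lemma set_pmf_topK: "set_pmf (topK n K v) = (\<lambda>l. set (take K l)) ` orderings n v"
  unfolding topK_def using finite_orderings orderings_nonempty by simp

lemma finite_set_pmf_topK: "finite (set_pmf (topK n K v))"
  unfolding set_pmf_topK using finite_orderings by simp

lemma topK_cong:
  assumes "\<And>k. k < n \<Longrightarrow> v k = v' k"
  shows "topK n K v = topK n K v'"
  unfolding topK_def using orderings_cong[OF assms] by simp

lemma set_pmf_topK_subset: "T \<in> set_pmf (topK n K v) \<Longrightarrow> T \<subseteq> {..<n}"
  by (auto simp: set_pmf_topK dest!: orderingsD(1) in_set_takeD)

lemma card_set_pmf_topK:
  assumes "T \<in> set_pmf (topK n K v)" and "K \<le> n"
  shows "card T = K"
proof -
  obtain l where l: "l \<in> orderings n v" and T: "T = set (take K l)"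
    using assms(1) by (auto simp: set_pmf_topK)
  show ?thesis
    using orderingsD(2,3)[OF l] assms(2) by (simp add: T distinct_card)
qed

lemma mem_topK_if_unique_max:
  assumes "T \<in> set_pmf (topK n K v)" and "i < n" and "K \<ge> 1"
    and max: "\<And>k. k < n \<Longrightarrow> k \<noteq> i \<Longrightarrow> v k < v i"
  shows "i \<in> T"
proof -
  obtain l where l: "l \<in> orderings n v" and T: "T = set (take K l)"
    using assms(1) by (auto simp: set_pmf_topK)
  obtain xs ys where l_eq: "l = xs @ i # ys"
    using orderingsD(1)[OF l] assms(2) split_list by (metis lessThan_iff)
  have "xs = []"
  proof (rule ccontr)
    assume "xs \<noteq> []"
    then obtain a where "a \<in> set xs"
      by (cases xs) auto
    then have "a < n" and "a \<noteq> i" and "v i \<le> v a"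
      using orderingsD[OF l] unfolding l_eq by (auto simp: sorted_wrt_append)
    then show False
      using max by force
  qed
  then show ?thesis
    using T l_eq assms(3) by (cases K) auto
qed

lemma not_mem_topK_if_unique_min:
  assumes "T \<in> set_pmf (topK n K v)" and "i < n" and "K < n"
    and min: "\<And>k. k < n \<Longrightarrow> k \<noteq> i \<Longrightarrow> v i < v k"
  shows "i \<notin> T"
proof -
  obtain l where l: "l \<in> orderings n v" and T: "T = set (take K l)"
    using assms(1) by (auto simp: set_pmf_topK)
  obtain xs ys where l_eq: "l = xs @ i # ys"
    using orderingsD(1)[OF l] assms(2) split_list by (metis lessThan_iff)
  have "ys = []"
  proof (rule ccontr)
    assume "ys \<noteq> []"
    then obtain b where "b \<in> set ys"
      by (cases ys) auto
    then have "b < n" and "b \<noteq> i" and "v b \<le> v i"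
      using orderingsD[OF l] unfolding l_eq by (auto simp: sorted_wrt_append)
    then show False
      using min by force
  qed
  then have "take K l = take K xs" and "i \<notin> set xs"
    using orderingsD(2,3)[OF l] assms(3) unfolding l_eq by auto
  then show ?thesis
    using T by (auto dest: in_set_takeD)
qed

lemma card_permutations_take_member_swap:
  assumes "i < n" and "j < n"
  shows "card {l \<in> permutations_of_set {..<n}. i \<in> set (take K l)}
    = card {l \<in> permutations_of_set {..<n}. j \<in> set (take K l)}"
proof (rule bij_betw_same_card)
  let ?\<tau> = "Transposition.transpose i j"
  have map_perm: "map ?\<tau> l \<in> permutations_of_set {..<n}" if "l \<in> permutations_of_set {..<n}" for l
    using that permutations_of_set_image_permutes[OF permutes_swap_id[of i "{..<n}" j]] assms by auto
  have "x \<in> set (take K (map ?\<tau> l)) \<longleftrightarrow> ?\<tau> x \<in> set (take K l)" for x l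
    by (simp add: take_map in_transpose_image_iff)
  then show "bij_betw (map ?\<tau>) {l \<in> permutations_of_set {..<n}. i \<in> set (take K l)}
      {l \<in> permutations_of_set {..<n}. j \<in> set (take K l)}"
    using map_perm by (intro bij_betw_byWitness[where f' = "map ?\<tau>"]) (auto simp: comp_def)
qed

lemma sum_card_permutations_take_member:
  assumes "K \<le> n"
  shows "(\<Sum>i<n. card {l \<in> permutations_of_set {..<n}. i \<in> set (take K l)})
    = K * card (permutations_of_set {..<n})"
proof -
  let ?P = "permutations_of_set {..<n}"
  have "(\<Sum>i<n. card {l \<in> ?P. i \<in> set (take K l)}) = (\<Sum>i<n. \<Sum>l\<in>?P. of_bool (i \<in> set (take K l)))"
    by (simp add: Int_def)
  also have "\<dots> = (\<Sum>l\<in>?P. \<Sum>i<n. of_bool (i \<in> set (take K l)))"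
    by (rule sum.swap)
  also have "\<dots> = (\<Sum>l\<in>?P. K)"
  proof (rule sum.cong)
    fix l assume "l \<in> ?P"
    then have "set (take K l) \<subseteq> {..<n}" and "card (set (take K l)) = K"
      using assms length_finite_permutations_of_set[of l] permutations_of_setD[of l]
      by (auto simp: distinct_card dest: in_set_takeD)
    then show "(\<Sum>i<n. of_bool (i \<in> set (take K l))) = K"
      by (simp add: Int_absorb1)
  qed simp
  finally show ?thesis
    by simp
qed

lemma card_permutations_take_member:
  assumes "i < n" and "K \<le> n"
  shows "n * card {l \<in> permutations_of_set {..<n}. i \<in> set (take K l)} = K * card (permutations_of_set {..<n})"
proof -
  have "(\<Sum>j<n. card {l \<in> permutations_of_set {..<n}. j \<in> set (take K l)})
      = (\<Sum>j<n. card {l \<in> permutations_of_set {..<n}. i \<in> set (take K l)})"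
    using card_permutations_take_member_swap[OF assms(1)] by (intro sum.cong) auto
  then show ?thesis
    using sum_card_permutations_take_member[OF assms(2)] by simp
qed

lemma expectation_topK_const_member:
  fixes q :: real
  assumes "i < n" and "K \<le> n" and "\<And>k. k < n \<Longrightarrow> v k = c"
  shows "measure_pmf.expectation (topK n K v) (\<lambda>T. if i \<in> T then q else 0) = q * K / n"
proof -
  let ?P = "permutations_of_set {..<n}"
  have topK: "topK n K v = map_pmf (\<lambda>l. set (take K l)) (pmf_of_set ?P)"
    using topK_cong[of n v "\<lambda>_. c" K] assms(3) by (simp add: topK_def orderings_const)
  have P: "finite ?P" "?P \<noteq> {}"
    using orderings_nonempty[of n "\<lambda>_. c"] by (simp_all add: orderings_const)
  have "measure_pmf.expectation (topK n K v) (\<lambda>T. if i \<in> T then q else 0)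
      = q * card {l \<in> ?P. i \<in> set (take K l)} / card ?P"
    unfolding topK integral_map_pmf using P
    by (simp add: integral_pmf_of_set sum.If_cases Int_def)
  also have "\<dots> = q * K / n"
  proof -
    have "real n * card {l \<in> ?P. i \<in> set (take K l)} = real K * card ?P"
      using card_permutations_take_member[OF assms(1,2)] by (metis of_nat_mult)
    then have "real (card {l \<in> ?P. i \<in> set (take K l)}) = real K * card ?P / n"
      using assms(1) by (simp add: field_simps)
    then show ?thesis
      using P by simp
  qed
  finally show ?thesis .
qed

lemma set_pmf_topK_nonempty: "T \<in> set_pmf (topK n K v) \<Longrightarrow> 1 \<le> K \<Longrightarrow> K \<le> n \<Longrightarrow> T \<noteq> {}"
  using card_set_pmf_topK by fastforce

lemma finite_set_pmf_topK_member: "T \<in> set_pmf (topK n K v) \<Longrightarrow> finite T"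
  by (metis finite_lessThan finite_subset set_pmf_topK_subset)

section \<open>Utilities in closed form\<close>

lemma user_util_eq_expectation_logsumexp:
  assumes "\<beta> > 0" and "1 \<le> K" and "K \<le> n"
  shows "user_util n \<sigma> \<beta> K s x
    = measure_pmf.expectation (topK n K (\<lambda>i. \<sigma> (s i) x)) (logsumexp \<beta> (\<lambda>i. \<sigma> (s i) x))"
  unfolding user_util_def
  using assms integral_noise_Max[OF assms(1) set_pmf_topK_subset set_pmf_topK_nonempty]
  by (intro integral_cong_AE AE_pmfI) simp_all

lemma player_util_eq_sum_expectation_logit_payoff:
  assumes "\<beta> > 0"
  shows "player_util n X \<sigma> \<beta> K i s
    = (\<Sum>x\<in>X. measure_pmf.expectation (topK n K (\<lambda>k. \<sigma> (s k) x)) (\<lambda>T. logit_payoff \<beta> (\<lambda>k. \<sigma> (s k) x) T i))"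
  unfolding player_util_def
  using integral_noise_chosen[OF assms(1) set_pmf_topK_subset]
  by (intro sum.cong refl integral_cong_AE AE_pmfI) simp_all

lemma logsumexp_const:
  assumes "\<beta> > 0" and "\<And>k. k \<in> T \<Longrightarrow> v k = c" and "card T = K" and "K \<ge> 1"
  shows "logsumexp \<beta> v T = c + \<beta> * ln K"
  using assms by (simp add: logsumexp_def ln_mult distrib_left)

lemma logit_payoff_const:
  assumes "\<beta> > 0" and "\<And>k. k \<in> T \<Longrightarrow> v k = c" and "card T = K" and "K \<ge> 1" and "i \<in> T"
  shows "logit_payoff \<beta> v T i = (c + \<beta> * ln K) / K"
  using assms logsumexp_const[OF assms(1-4)] by (simp add: logit_payoff_def)

lemma logsumexp_ge:
  assumes "\<beta> > 0" and "finite T" and "k \<in> T"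
  shows "v k \<le> logsumexp \<beta> v T"
proof -
  have "exp (v k / \<beta>) \<le> (\<Sum>j\<in>T. exp (v j / \<beta>))"
    using assms(2,3) by (intro member_le_sum) auto
  then have "v k / \<beta> \<le> ln (\<Sum>j\<in>T. exp (v j / \<beta>))"
    by (subst ln_exp[symmetric]) (intro ln_mono; simp)
  then show ?thesis
    using assms(1) by (simp add: logsumexp_def field_simps)
qed

text \<open>With relevances in \<open>[0, 1]\<close>, the sum of exponentials lies in \<open>[1, K e\<^bsup>1/\<beta>\<^esup>]\<close>.\<close>

lemma logit_payoff_le:
  assumes "\<beta> > 0" and "card T = K" and "K \<ge> 1" and v: "\<And>k. k \<in> T \<Longrightarrow> 0 \<le> v k \<and> v k \<le> 1"
  shows "logit_payoff \<beta> v T i \<le> 1 + \<beta> * ln K"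
proof (cases "i \<in> T")
  case True
  define Z where "Z = (\<Sum>k\<in>T. exp (v k / \<beta>))"
  have T: "finite T"
    using assms(2,3) card_ge_0_finite by force
  have Z_ge: "exp (v i / \<beta>) \<le> Z"
    unfolding Z_def using T True by (intro member_le_sum) auto
  moreover have "1 \<le> exp (v i / \<beta>)"
    using v[OF True] assms(1) by simp
  ultimately have Z_ge_1: "1 \<le> Z"
    by linarith
  have "Z \<le> (\<Sum>k\<in>T. exp (1 / \<beta>))"
    unfolding Z_def using v assms(1) by (intro sum_mono) (simp add: divide_right_mono)
  then have L_le: "logsumexp \<beta> v T \<le> \<beta> * ln (K * exp (1 / \<beta>))"
    using assms(1-3) Z_ge_1 by (simp add: logsumexp_def Z_def[symmetric])
  have "logit_payoff \<beta> v T i = exp (v i / \<beta>) / Z * logsumexp \<beta> v T"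
    using True by (simp add: logit_payoff_def Z_def)
  also have "\<dots> \<le> logsumexp \<beta> v T"
    using Z_ge Z_ge_1 assms(1) by (intro mult_left_le_one_le) (simp_all add: logsumexp_def Z_def[symmetric])
  also have "\<dots> \<le> \<beta> * ln (K * exp (1 / \<beta>))"
    by (fact L_le)
  also have "\<dots> = 1 + \<beta> * ln K"
    using assms(1,3) by (simp add: ln_mult field_simps)
  finally show ?thesis .
qed (use assms(1,3) in \<open>simp add: logit_payoff_def\<close>)

lemma measure_pmf_expectation_eq_const:
  fixes f :: "'a \<Rightarrow> real"
  assumes "\<And>x. x \<in> set_pmf p \<Longrightarrow> f x = c"
  shows "measure_pmf.expectation p f = c"
  using assms measure_pmf.prob_space[of p]
  by (subst integral_cong_AE[where g = "\<lambda>_. c"]) (auto simp: AE_measure_pmf_iff)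

lemma expectation_logsumexp_topK_const:
  assumes "\<beta> > 0" and "1 \<le> K" and "K \<le> n" and "\<And>k. k < n \<Longrightarrow> v k = c"
  shows "measure_pmf.expectation (topK n K v) (logsumexp \<beta> v) = c + \<beta> * ln K"
proof (rule measure_pmf_expectation_eq_const)
  fix T assume T: "T \<in> set_pmf (topK n K v)"
  show "logsumexp \<beta> v T = c + \<beta> * ln K"
    using assms set_pmf_topK_subset[OF T] card_set_pmf_topK[OF T] by (intro logsumexp_const) auto
qed

lemma expectation_logit_payoff_topK_const:
  assumes "\<beta> > 0" and "1 \<le> K" and "K \<le> n" and "\<And>k. k < n \<Longrightarrow> v k = c" and "i < n"
  shows "measure_pmf.expectation (topK n K v) (\<lambda>T. logit_payoff \<beta> v T i) = (c + \<beta> * ln K) / n"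
proof -
  have "logit_payoff \<beta> v T i = (if i \<in> T then (c + \<beta> * ln K) / K else 0)"
    if T: "T \<in> set_pmf (topK n K v)" for T
  proof (cases "i \<in> T")
    case True
    have "v k = c" if "k \<in> T" for k
      using assms(4) set_pmf_topK_subset[OF T] that by auto
    then show ?thesis
      using logit_payoff_const[OF assms(1) _ card_set_pmf_topK[OF T assms(3)] assms(2) True] True by simp
  qed (simp add: logit_payoff_def)
  then have "measure_pmf.expectation (topK n K v) (\<lambda>T. logit_payoff \<beta> v T i)
      = measure_pmf.expectation (topK n K v) (\<lambda>T. if i \<in> T then (c + \<beta> * ln K) / K else 0)"
    by (intro integral_cong_AE AE_pmfI) simp_all
  also have "\<dots> = (c + \<beta> * ln K) / n"
    using assms by (simp add: expectation_topK_const_member)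
  finally show ?thesis .
qed

lemma expectation_logsumexp_topK_ge:
  assumes "\<beta> > 0" and "1 \<le> K" and "K \<le> n" and "\<And>k. k < n \<Longrightarrow> c \<le> v k"
  shows "c \<le> measure_pmf.expectation (topK n K v) (logsumexp \<beta> v)"
proof (rule measure_pmf.integral_ge_const[OF integrable_measure_pmf_finite[OF finite_set_pmf_topK] AE_pmfI])
  fix T assume T: "T \<in> set_pmf (topK n K v)"
  then obtain k where k: "k \<in> T"
    using set_pmf_topK_nonempty assms(2,3) by blast
  then have "c \<le> v k"
    using assms(4) set_pmf_topK_subset[OF T] by auto
  also have "\<dots> \<le> logsumexp \<beta> v T"
    using assms(1) finite_set_pmf_topK_member[OF T] k by (rule logsumexp_ge)
  finally show "c \<le> logsumexp \<beta> v T" .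
qed

lemma expectation_logsumexp_topK_ge_unique_max:
  assumes "\<beta> > 0" and "1 \<le> K" and "i < n" and "\<And>k. k < n \<Longrightarrow> k \<noteq> i \<Longrightarrow> v k < v i"
  shows "v i \<le> measure_pmf.expectation (topK n K v) (logsumexp \<beta> v)"
proof (rule measure_pmf.integral_ge_const[OF integrable_measure_pmf_finite[OF finite_set_pmf_topK] AE_pmfI])
  fix T assume T: "T \<in> set_pmf (topK n K v)"
  show "v i \<le> logsumexp \<beta> v T"
    using assms(1) finite_set_pmf_topK_member[OF T] mem_topK_if_unique_max[OF T assms(3,2,4)]
    by (rule logsumexp_ge)
qed

lemma expectation_logit_payoff_topK_unique_min:
  assumes "i < n" and "K < n" and "\<And>k. k < n \<Longrightarrow> k \<noteq> i \<Longrightarrow> v i < v k"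
  shows "measure_pmf.expectation (topK n K v) (\<lambda>T. logit_payoff \<beta> v T i) = 0"
proof (rule measure_pmf_expectation_eq_const)
  fix T assume T: "T \<in> set_pmf (topK n K v)"
  show "logit_payoff \<beta> v T i = 0"
    using not_mem_topK_if_unique_min[OF T assms] by (simp add: logit_payoff_def)
qed

lemma expectation_logit_payoff_topK_le:
  assumes "\<beta> > 0" and "1 \<le> K" and "K \<le> n" and "\<And>k. k < n \<Longrightarrow> 0 \<le> v k \<and> v k \<le> 1"
  shows "measure_pmf.expectation (topK n K v) (\<lambda>T. logit_payoff \<beta> v T i) \<le> 1 + \<beta> * ln K"
proof (rule measure_pmf.integral_le_const[OF integrable_measure_pmf_finite[OF finite_set_pmf_topK] AE_pmfI])
  fix T assume T: "T \<in> set_pmf (topK n K v)"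
  show "logit_payoff \<beta> v T i \<le> 1 + \<beta> * ln K"
    using assms set_pmf_topK_subset[OF T] card_set_pmf_topK[OF T] by (intro logit_payoff_le) auto
qed

section \<open>Lower bounds on the price of anarchy\<close>

lemma is_CCE_return_pmf:
  assumes "s \<in> profiles n S"
    and "\<And>i s'. i < n \<Longrightarrow> s' \<in> S i \<Longrightarrow> player_util n X \<sigma> \<beta> K i (s(i := s')) \<le> player_util n X \<sigma> \<beta> K i s"
  shows "is_CCE n S X \<sigma> \<beta> K (return_pmf s)"
  using assms by (simp add: is_CCE_def)

lemma PoA_ge_welfare_ratio:
  assumes "finite (profiles n S)" and "s \<in> profiles n S" and "is_CCE n S X \<sigma> \<beta> K (return_pmf s\<^sub>0)"
    and "c > 0" and "\<And>s. s \<in> profiles n S \<Longrightarrow> c \<le> welfare n X \<sigma> \<beta> K s"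
  shows "welfare n X \<sigma> \<beta> K s / welfare n X \<sigma> \<beta> K s\<^sub>0 \<le> PoA n S X \<sigma> \<beta> K"
proof -
  let ?W = "welfare n X \<sigma> \<beta> K"
  let ?C = "(\<lambda>\<alpha>. measure_pmf.expectation \<alpha> ?W) ` {\<alpha>. is_CCE n S X \<sigma> \<beta> K \<alpha>}"
  have s\<^sub>0: "s\<^sub>0 \<in> profiles n S"
    using assms(3) by (simp add: is_CCE_def)
  have W\<^sub>0: "?W s\<^sub>0 \<in> ?C"
    using assms(3) by (auto intro!: image_eqI[where x = "return_pmf s\<^sub>0"])
  have C_ge: "c \<le> x" if "x \<in> ?C" for x
  proof -
    obtain \<alpha> where \<alpha>: "is_CCE n S X \<sigma> \<beta> K \<alpha>" and x: "x = measure_pmf.expectation \<alpha> ?W"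
      using \<open>x \<in> ?C\<close> by blast
    have support: "set_pmf \<alpha> \<subseteq> profiles n S"
      using \<alpha> by (simp add: is_CCE_def)
    then have "finite (set_pmf \<alpha>)"
      using assms(1) by (rule finite_subset)
    then show ?thesis
      unfolding x using support assms(5)
      by (intro measure_pmf.integral_ge_const integrable_measure_pmf_finite AE_pmfI) auto
  qed
  have Inf_le: "Inf ?C \<le> ?W s\<^sub>0"
    using W\<^sub>0 by (rule cInf_lower) (use C_ge in \<open>rule bdd_belowI\<close>)
  have Inf_ge: "c \<le> Inf ?C"
    using W\<^sub>0 C_ge by (intro cInf_greatest) auto
  have "?W s \<le> Max (?W ` profiles n S)"
    using assms(1,2) by simp
  then have "?W s / ?W s\<^sub>0 \<le> Max (?W ` profiles n S) / Inf ?C"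
    using Inf_le Inf_ge assms(4) assms(5)[OF assms(2)] by (intro frac_le) auto
  then show ?thesis
    by (simp add: PoA_def)
qed

section \<open>The lower-bound instance\<close>

text \<open>Items and users are points of \<open>\<real>\<^sup>2\<close>: the first coordinate tags their kind, the second
  their index.\<close>

definition generic_item :: "real list" where
  "generic_item = [0, 0]"

definition niche_item :: "nat \<Rightarrow> real list" where
  "niche_item i = [1, real i]"

definition mainstream_user :: "nat \<Rightarrow> real list" where
  "mainstream_user m = [2, real m]"

definition niche_user :: "nat \<Rightarrow> real list" where
  "niche_user j = [3, real j]"

definition example_actions :: "nat \<Rightarrow> real list set" where
  "example_actions i = {generic_item, niche_item i}"

definition example_users :: "nat \<Rightarrow> real list set" where
  "example_users n = mainstream_user ` {..<n} \<union> niche_user ` {..<n}"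

definition example_relevance :: "nat \<Rightarrow> real list \<Rightarrow> real list \<Rightarrow> real" where
  "example_relevance n a x =
     (if x ! 0 = 2 then (if a ! 0 = 0 then 1 else 1 - 1 / (2 * real n))
      else if x ! 0 = 3 \<and> a ! 0 = 1 \<and> a ! 1 = x ! 1 then 1 else 0)"

definition all_generic :: "nat \<Rightarrow> nat \<Rightarrow> real list" where
  "all_generic n = restrict (\<lambda>_. generic_item) {..<n}"

definition all_niche :: "nat \<Rightarrow> nat \<Rightarrow> real list" where
  "all_niche n = restrict niche_item {..<n}"

lemma example_relevance_simps [simp]:
  "example_relevance n generic_item (mainstream_user m) = 1"
  "example_relevance n (niche_item i) (mainstream_user m) = 1 - 1 / (2 * real n)"
  "example_relevance n generic_item (niche_user j) = 0"
  "example_relevance n (niche_item i) (niche_user j) = of_bool (i = j)"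
  by (auto simp: example_relevance_def generic_item_def niche_item_def mainstream_user_def niche_user_def)

lemma sum_example_users:
  "(\<Sum>x\<in>example_users n. f x) = (\<Sum>m<n. f (mainstream_user m)) + (\<Sum>j<n. f (niche_user j))"
proof -
  have "inj mainstream_user" and "inj niche_user"
    by (auto intro!: injI simp: mainstream_user_def niche_user_def)
  moreover have "mainstream_user ` {..<n} \<inter> niche_user ` {..<n} = {}"
    by (auto simp: mainstream_user_def niche_user_def)
  ultimately show ?thesis
    unfolding example_users_def by (simp add: sum.union_disjoint sum.reindex inj_on_def inj_def)
qed

lemma example_action_cases:
  assumes "s \<in> profiles n example_actions" and "k < n"
  obtains "s k = generic_item" | "s k = niche_item k"
  using assms by (auto simp: profiles_def example_actions_def PiE_iff)

lemma cc_game_example: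
  assumes "n > 0" and "\<beta> > 0" and "1 \<le> K" and "K \<le> n"
  shows "cc_game n 2 example_actions (example_users n) (example_relevance n) \<beta> K"
proof -
  have "1 / (2 * real n) \<le> 1"
    using assms(1) by simp
  then show ?thesis
    using assms
    by (auto simp: cc_game_def example_users_def example_actions_def example_relevance_def
        mainstream_user_def niche_user_def generic_item_def niche_item_def)
qed

lemma finite_profiles_example: "finite (profiles n example_actions)"
  by (auto simp: profiles_def example_actions_def intro!: finite_PiE)

lemma all_generic_in_profiles: "all_generic n \<in> profiles n example_actions"
  by (auto simp: profiles_def all_generic_def example_actions_def)

lemma all_niche_in_profiles: "all_niche n \<in> profiles n example_actions"
  by (auto simp: profiles_def all_niche_def example_actions_def)

context
  fixes n K :: nat and \<beta> :: real
  assumes \<beta>: "\<beta> > 0" and K: "1 \<le> K" "K < n"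
begin

private lemma K_le_n: "K \<le> n"
  using K by simp

lemma welfare_all_generic:
  "welfare n (example_users n) (example_relevance n) \<beta> K (all_generic n) = n * (1 + 2 * (\<beta> * ln K))"
proof -
  have "user_util n (example_relevance n) \<beta> K (all_generic n) (mainstream_user m) = 1 + \<beta> * ln K" for m
    unfolding user_util_eq_expectation_logsumexp[OF \<beta> K(1) K_le_n]
    by (rule expectation_logsumexp_topK_const[OF \<beta> K(1) K_le_n]) (simp add: all_generic_def)
  moreover have "user_util n (example_relevance n) \<beta> K (all_generic n) (niche_user j) = 0 + \<beta> * ln K" for j
    unfolding user_util_eq_expectation_logsumexp[OF \<beta> K(1) K_le_n]
    by (rule expectation_logsumexp_topK_const[OF \<beta> K(1) K_le_n]) (simp add: all_generic_def)
  ultimately show ?thesis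
    by (simp add: welfare_def sum_example_users algebra_simps)
qed

lemma welfare_all_niche_ge:
  "n * (2 + \<beta> * ln K) - 1/2 \<le> welfare n (example_users n) (example_relevance n) \<beta> K (all_niche n)"
proof -
  have mainstream: "user_util n (example_relevance n) \<beta> K (all_niche n) (mainstream_user m)
      = 1 - 1 / (2 * n) + \<beta> * ln K" for m
    unfolding user_util_eq_expectation_logsumexp[OF \<beta> K(1) K_le_n]
    by (rule expectation_logsumexp_topK_const[OF \<beta> K(1) K_le_n]) (simp add: all_niche_def)
  have "1 \<le> user_util n (example_relevance n) \<beta> K (all_niche n) (niche_user j)" if "j < n" for j
    unfolding user_util_eq_expectation_logsumexp[OF \<beta> K(1) K_le_n]
    using expectation_logsumexp_topK_ge_unique_max[OF \<beta> K(1) that,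
        of "\<lambda>k. example_relevance n (all_niche n k) (niche_user j)"] that
    by (simp add: all_niche_def)
  then have niche: "(\<Sum>j<n. 1) \<le> (\<Sum>j<n. user_util n (example_relevance n) \<beta> K (all_niche n) (niche_user j))"
    by (intro sum_mono) simp
  have "n * (2 + \<beta> * ln K) - 1/2 = n * (1 - 1 / (2 * n) + \<beta> * ln K) + (\<Sum>j<n. 1)"
    using K by (simp add: field_simps)
  also have "\<dots> \<le> n * (1 - 1 / (2 * n) + \<beta> * ln K)
      + (\<Sum>j<n. user_util n (example_relevance n) \<beta> K (all_niche n) (niche_user j))"
    using niche by simp
  also have "\<dots> = welfare n (example_users n) (example_relevance n) \<beta> K (all_niche n)"
    by (simp add: welfare_def sum_example_users mainstream)
  finally show ?thesis .
qed

lemma welfare_ge: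
  assumes "s \<in> profiles n example_actions"
  shows "n - 1/2 \<le> welfare n (example_users n) (example_relevance n) \<beta> K s"
proof -
  have relevance_bounds: "1 - 1 / (2 * n) \<le> example_relevance n (s k) (mainstream_user m)
      \<and> 0 \<le> example_relevance n (s k) (niche_user j)" if "k < n" for k m j
    using assms that by (cases rule: example_action_cases) auto
  have "1 - 1 / (2 * n) \<le> user_util n (example_relevance n) \<beta> K s (mainstream_user m)" for m
    unfolding user_util_eq_expectation_logsumexp[OF \<beta> K(1) K_le_n]
    using relevance_bounds by (intro expectation_logsumexp_topK_ge[OF \<beta> K(1) K_le_n]) simp
  moreover have "0 \<le> user_util n (example_relevance n) \<beta> K s (niche_user j)" for j
    unfolding user_util_eq_expectation_logsumexp[OF \<beta> K(1) K_le_n]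
    using relevance_bounds by (intro expectation_logsumexp_topK_ge[OF \<beta> K(1) K_le_n]) simp
  ultimately have "(\<Sum>m<n. 1 - 1 / (2 * n)) + (\<Sum>j<n. 0)
      \<le> (\<Sum>m<n. user_util n (example_relevance n) \<beta> K s (mainstream_user m))
        + (\<Sum>j<n. user_util n (example_relevance n) \<beta> K s (niche_user j))"
    by (intro add_mono sum_mono)
  moreover have "(\<Sum>m<n. 1 - 1 / (2 * n)) + (\<Sum>j<n. 0) = n - 1/2"
    using K by (simp add: field_simps)
  ultimately show ?thesis
    by (simp add: welfare_def sum_example_users)
qed

lemma player_util_all_generic:
  assumes "i < n"
  shows "player_util n (example_users n) (example_relevance n) \<beta> K i (all_generic n) = 1 + 2 * (\<beta> * ln K)"
proof -
  have "measure_pmf.expectation (topK n K (\<lambda>k. example_relevance n (all_generic n k) (mainstream_user m)))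
      (\<lambda>T. logit_payoff \<beta> (\<lambda>k. example_relevance n (all_generic n k) (mainstream_user m)) T i)
      = (1 + \<beta> * ln K) / n" for m
    by (rule expectation_logit_payoff_topK_const[OF \<beta> K(1) K_le_n _ assms]) (simp add: all_generic_def)
  moreover have "measure_pmf.expectation (topK n K (\<lambda>k. example_relevance n (all_generic n k) (niche_user j)))
      (\<lambda>T. logit_payoff \<beta> (\<lambda>k. example_relevance n (all_generic n k) (niche_user j)) T i)
      = (0 + \<beta> * ln K) / n" for j
    by (rule expectation_logit_payoff_topK_const[OF \<beta> K(1) K_le_n _ assms]) (simp add: all_generic_def)
  ultimately show ?thesis
    using assms by (simp add: player_util_eq_sum_expectation_logit_payoff[OF \<beta>] sum_example_users)
qed

lemma player_util_niche_deviation_le: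
  assumes "i < n"
  shows "player_util n (example_users n) (example_relevance n) \<beta> K i ((all_generic n)(i := niche_item i))
    \<le> 1 + \<beta> * ln K + (n - 1) * (\<beta> * ln K) / n"
proof -
  define s where "s = (all_generic n)(i := niche_item i)"
  define F where "F x = measure_pmf.expectation (topK n K (\<lambda>k. example_relevance n (s k) x))
    (\<lambda>T. logit_payoff \<beta> (\<lambda>k. example_relevance n (s k) x) T i)" for x
  have s_other: "s k = generic_item" if "k < n" "k \<noteq> i" for k
    using that by (simp add: s_def all_generic_def)
  have "F (mainstream_user m) = 0" for m
    unfolding F_def using s_other K assms
    by (intro expectation_logit_payoff_topK_unique_min) (simp_all add: s_def)
  moreover have "F (niche_user j) = (0 + \<beta> * ln K) / n" if "j \<noteq> i" for j
    unfolding F_def using s_other that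
    by (intro expectation_logit_payoff_topK_const[OF \<beta> K(1) K_le_n _ assms]) (auto simp: s_def)
  moreover have "F (niche_user i) \<le> 1 + \<beta> * ln K"
    unfolding F_def using s_other
    by (intro expectation_logit_payoff_topK_le[OF \<beta> K(1) K_le_n]) (auto simp: s_def)
  ultimately have "(\<Sum>x\<in>example_users n. F x) \<le> 1 + \<beta> * ln K + (\<Sum>j\<in>{..<n} - {i}. \<beta> * ln K / n)"
    using assms by (simp add: sum_example_users sum.remove)
  also have "\<dots> = 1 + \<beta> * ln K + (n - 1) * (\<beta> * ln K) / n"
    using assms by (simp add: of_nat_diff)
  finally show ?thesis
    by (simp add: player_util_eq_sum_expectation_logit_payoff[OF \<beta>] F_def s_def)
qed

lemma all_generic_is_CCE:
  "is_CCE n example_actions (example_users n) (example_relevance n) \<beta> K (return_pmf (all_generic n))"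
proof (rule is_CCE_return_pmf[OF all_generic_in_profiles])
  fix i s' assume i: "i < n" and "s' \<in> example_actions i"
  then consider "s' = generic_item" | "s' = niche_item i"
    by (auto simp: example_actions_def)
  then show "player_util n (example_users n) (example_relevance n) \<beta> K i ((all_generic n)(i := s'))
      \<le> player_util n (example_users n) (example_relevance n) \<beta> K i (all_generic n)"
  proof cases
    case 1
    then have "(all_generic n)(i := s') = all_generic n"
      using i by (auto simp: all_generic_def)
    then show ?thesis
      by simp
  next
    case 2
    have "(n - 1) * (\<beta> * ln K) / n \<le> \<beta> * ln K"
      using \<beta> K by (simp add: field_simps mult_left_le)
    then show ?thesis
      using player_util_niche_deviation_le[OF i] by (simp add: 2 player_util_all_generic[OF i])
  qed
qed

end

lemma welfare_ratio_gt_bound: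
  fixes n d :: real
  assumes "n > 0" and "0 \<le> d" and "d \<le> 2/5"
  shows "(n - 1) / n + 1 / (1 + 5 * d) < (n * (2 + d) - 1/2) / (n * (1 + 2 * d))"
proof -
  let ?a = "(n - 1) * (1 + 5 * d) + n" and ?b = "n * (1 + 5 * d)"
  let ?c = "n * (2 + d) - 1/2" and ?e = "n * (1 + 2 * d)"
  have "0 \<le> n * d * (4 - 10 * d)"
    using assms by (intro mult_nonneg_nonneg) auto
  then have "0 < n * (1 + 9 * d + 20 * d\<^sup>2 + n * d * (4 - 10 * d)) / 2"
    using assms by (intro divide_pos_pos mult_pos_pos add_pos_nonneg) auto
  also have "\<dots> = ?c * ?b - ?a * ?e"
    by (simp add: field_simps power2_eq_square)
  finally have "?a * ?e < ?c * ?b"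
    by simp
  moreover have "?b > 0" and "?e > 0"
    using assms by simp_all
  ultimately have "?a / ?b < ?c / ?e"
    by (subst frac_less_eq) (auto intro: divide_neg_pos)
  also have "?a / ?b = (n - 1) / n + 1 / (1 + 5 * d)"
    using assms by (simp add: field_simps)
  finally show ?thesis .
qed

theorem theorem2:
  fixes \<beta> :: real and n K :: nat
  assumes "0 < \<beta>" and "\<beta> \<le> 1" and "n > 2" and "1 \<le> K" and "K \<le> n - 1"
    and "real K \<le> exp (1 / (5 * \<beta>))"
  shows "\<exists>(d::nat) (S :: nat \<Rightarrow> real list set) (X :: real list set)
            (\<sigma> :: real list \<Rightarrow> real list \<Rightarrow> real).
           cc_game n d S X \<sigma> \<beta> K \<and>
           PoA n S X \<sigma> \<beta> K > (real n - 1) / real n + 1 / (1 + 5 * \<beta> * ln (real K))"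
proof -
  let ?W = "welfare n (example_users n) (example_relevance n) \<beta> K"
  have K_lt_n: "K < n"
    using assms(3,5) by linarith
  have "ln K \<le> ln (exp (1 / (5 * \<beta>)))"
    using assms(4,6) by (intro ln_mono) auto
  then have "ln K \<le> 1 / (5 * \<beta>)"
    by simp
  then have d: "0 \<le> \<beta> * ln K" "\<beta> * ln K \<le> 1/5"
    using assms(1,4) by (auto simp: field_simps)
  have "(real n - 1) / n + 1 / (1 + 5 * (\<beta> * ln K)) < (n * (2 + \<beta> * ln K) - 1/2) / (n * (1 + 2 * (\<beta> * ln K)))"
    using assms(3) d by (intro welfare_ratio_gt_bound) auto
  also have "\<dots> \<le> ?W (all_niche n) / ?W (all_generic n)"
    using welfare_all_niche_ge[OF assms(1,4) K_lt_n] d assms(3)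
    by (simp add: welfare_all_generic[OF assms(1,4) K_lt_n] divide_right_mono)
  also have "\<dots> \<le> PoA n example_actions (example_users n) (example_relevance n) \<beta> K"
    using assms(3) welfare_ge[OF assms(1,4) K_lt_n]
    by (intro PoA_ge_welfare_ratio[OF finite_profiles_example all_niche_in_profiles
          all_generic_is_CCE[OF assms(1,4) K_lt_n], of "n - 1/2"]) auto
  finally show ?thesis
    using cc_game_example[of n \<beta> K] assms K_lt_n by (auto simp: mult.assoc)
qed

end
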